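(* Assume Schanuel's conjecture $(S)$. Let $\alpha\neq 0$ be an algebraic number and let $z$ be an irrational complex number. If $\alpha^{\alpha^{z}}=z$, then $z$ is transcendental.
   Context: Schanuel's conjecture $(S)$: if $\alpha_1,\dots,\alpha_n\in\mathbb{C}$ are linearly independent over $\mathbb{Q}$, then the transcendence degree of $\mathbb{Q}(\alpha_1,\dots,\alpha_n,e^{\alpha_1},\dots,e^{\alpha_n})$ over $\mathbb{Q}$ is at least $n$. Powers of $\alpha$ are defined via a fixed determination $\log\alpha$: $\alpha^{u}:=e^{u\log\alpha}$, and $\alpha^{\alpha^{z}}:=e^{\alpha^{z}\log\alpha}$. *)

theory Defs
  imports "HOL-Analysis.Analysis" "HOL-Computational_Algebra.Polynomial"
begin

definition Q_lin_indep :: "nat \<Rightarrow> (nat \<Rightarrow> complex) \<Rightarrow> bool" where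
  "Q_lin_indep n a \<longleftrightarrow>
     (\<forall>q :: nat \<Rightarrow> rat. (\<Sum>i<n. of_rat (q i) * a i) = 0 \<longrightarrow> (\<forall>i<n. q i = 0))"

text \<open>A polynomial is given by a finite set E of exponent vectors (supported in T) with
  rational coefficients c.\<close>
definition Q_alg_indep :: "complex set \<Rightarrow> bool" where
  "Q_alg_indep T \<longleftrightarrow> finite T \<and>
     (\<forall>(E :: (complex \<Rightarrow> nat) set) (c :: (complex \<Rightarrow> nat) \<Rightarrow> rat).
        finite E \<longrightarrow> (\<forall>e\<in>E. \<forall>x. x \<notin> T \<longrightarrow> e x = 0) \<longrightarrow>
        (\<Sum>e\<in>E. of_rat (c e) * (\<Prod>t\<in>T. t ^ e t)) = 0 \<longrightarrow> (\<forall>e\<in>E. c e = 0))"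

text \<open>Transcendence degree of Q(S) over Q is at least n (S finite): S contains n
  algebraically independent elements (a transcendence basis can be chosen from generators).\<close>
definition trdeg_ge :: "complex set \<Rightarrow> nat \<Rightarrow> bool" where
  "trdeg_ge S n \<longleftrightarrow> (\<exists>T\<subseteq>S. card T = n \<and> Q_alg_indep T)"

definition schanuel :: bool where
  "schanuel \<longleftrightarrow> (\<forall>n (a :: nat \<Rightarrow> complex). Q_lin_indep n a \<longrightarrow>
       trdeg_ge (a ` {..<n} \<union> (\<lambda>i. exp (a i)) ` {..<n}) n)"

end

theory Submission
  imports Defs "HOL-Library.Multiset"
begin

text \<open>Put \<open>\<beta> = \<alpha>\<^sup>z = exp (z L)\<close>, so that \<open>exp (\<beta> L) = z\<close>, and suppose \<open>z\<close> algebraic. If \<open>\<beta>\<close>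
  is algebraic, Schanuel's conjecture for the \<open>\<rat>\<close>-independent \<open>L, z L\<close> yields two algebraically
  independent numbers among \<open>L, z L, \<alpha>, \<beta>\<close>; but \<open>\<alpha>, \<beta>\<close> are algebraic and \<open>z L / L\<close> is
  algebraic. Otherwise Schanuel for \<open>L, z L, \<beta> L\<close> yields three algebraically independent numbers
  among \<open>L, z L, \<beta> L, \<alpha>, \<beta>, z\<close>, which all lie in the algebraic closure of \<open>\<rat>(L, \<beta>)\<close>.
  Both contradictions come from one observation: in an algebraically independent set no monomial
  is an algebraic multiple \<open>w\<close> of another, since substituting their quotient into a rational
  polynomial killing \<open>w\<close> gives a nontrivial relation among distinct monomials.\<close>

lemma prod_mset_eq_prod_count_power:
  assumes "finite T" "set_mset M \<subseteq> T"
  shows "prod_mset M = (\<Prod>t\<in>T. t ^ count M t)"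
  unfolding prod_mset_multiplicity
  by (rule prod.mono_neutral_left) (use assms in \<open>auto simp: not_in_iff\<close>)

lemma prod_mset_repeat_mset: "prod_mset (repeat_mset k M) = prod_mset M ^ k"
  by (induction k) simp_all

lemma Q_alg_indep_prod_mset:
  fixes g :: "'a \<Rightarrow> complex multiset"
  assumes ind: "Q_alg_indep T" and "finite K" "inj_on g K" "\<And>k. k \<in> K \<Longrightarrow> set_mset (g k) \<subseteq> T"
    and rel: "(\<Sum>k\<in>K. of_rat (c k) * prod_mset (g k)) = 0"
  shows "\<forall>k\<in>K. c k = 0"
proof -
  have fin: "finite T" using ind unfolding Q_alg_indep_def by blast
  have inj: "inj_on (count \<circ> g) K"
    using \<open>inj_on g K\<close> by (simp add: inj_on_def multiset_eqI)
  define c' where "c' = c \<circ> the_inv_into K (count \<circ> g)"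
  have c': "c' (count (g k)) = c k" if "k \<in> K" for k
    using the_inv_into_f_f[OF inj that] by (simp add: c'_def)
  have "(\<Sum>e\<in>(count \<circ> g) ` K. of_rat (c' e) * (\<Prod>t\<in>T. t ^ e t))
      = (\<Sum>k\<in>K. of_rat (c' (count (g k))) * (\<Prod>t\<in>T. t ^ count (g k) t))"
    by (subst sum.reindex[OF inj]) simp
  also have "\<dots> = (\<Sum>k\<in>K. of_rat (c k) * prod_mset (g k))"
    using assms(4) by (intro sum.cong) (simp_all add: c' prod_mset_eq_prod_count_power[OF fin])
  finally have "(\<Sum>e\<in>(count \<circ> g) ` K. of_rat (c' e) * (\<Prod>t\<in>T. t ^ e t)) = 0"
    using rel by simp
  moreover have "\<forall>e\<in>(count \<circ> g) ` K. \<forall>x. x \<notin> T \<longrightarrow> e x = 0"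
    using assms(4) by (fastforce simp: count_eq_zero_iff)
  ultimately have "\<forall>e\<in>(count \<circ> g) ` K. c' e = 0"
    using ind \<open>finite K\<close> unfolding Q_alg_indep_def by blast
  then show ?thesis by (simp add: c')
qed

lemma repeat_mset_combination_inj:
  fixes M N :: "'a multiset"
  assumes "M \<noteq> N"
  shows "inj_on (\<lambda>k. repeat_mset k M + repeat_mset (d - k) N) {..d}"
proof (rule inj_onI)
  fix k l assume "k \<in> {..d}" "l \<in> {..d}"
    and eq: "repeat_mset k M + repeat_mset (d - k) N = repeat_mset l M + repeat_mset (d - l) N"
  obtain t where t: "count M t \<noteq> count N t" using assms by (meson multiset_eqI)
  have "k * count M t + (d - k) * count N t = l * count M t + (d - l) * count N t"
    using arg_cong[OF eq, of "\<lambda>X. count X t"] by (simp only: count_union count_repeat_mset)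
  then have "int k * int (count M t) + (int d - int k) * int (count N t)
      = int l * int (count M t) + (int d - int l) * int (count N t)"
    using \<open>k \<in> {..d}\<close> \<open>l \<in> {..d}\<close> by (metis atMost_iff of_nat_add of_nat_diff of_nat_mult)
  then have "int k * (int (count M t) - int (count N t)) = int l * (int (count M t) - int (count N t))"
    by (simp add: algebra_simps)
  then show "k = l" using t by simp
qed

lemma Q_alg_indep_prod_mset_neq:
  assumes ind: "Q_alg_indep T" and "algebraic w"
    and "set_mset M \<subseteq> T" "set_mset N \<subseteq> T" "M \<noteq> N"
  shows "prod_mset M \<noteq> w * prod_mset N"
proof
  assume rel: "prod_mset M = w * prod_mset N"
  obtain p where p: "\<forall>i. coeff p i \<in> \<rat>" "p \<noteq> 0" "poly p w = 0"
    using \<open>algebraic w\<close> algebraic_altdef by blast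
  have "\<forall>i. \<exists>r. coeff p i = of_rat r" using p(1) by (auto elim: Rats_cases)
  then obtain q where q: "\<forall>i. coeff p i = of_rat (q i)" by (rule choice[THEN exE])
  define d where "d = degree p"
  define g where "g k = repeat_mset k M + repeat_mset (d - k) N" for k
  have g: "prod_mset (g k) = w ^ k * prod_mset N ^ d" if "k \<in> {..d}" for k
  proof -
    have "prod_mset (g k) = w ^ k * (prod_mset N ^ k * prod_mset N ^ (d - k))"
      by (simp add: g_def prod_mset_repeat_mset rel power_mult_distrib)
    also have "\<dots> = w ^ k * prod_mset N ^ d"
      using that by (simp flip: power_add)
    finally show ?thesis .
  qed
  have "(\<Sum>k\<le>d. of_rat (q k) * prod_mset (g k)) = (\<Sum>k\<le>d. coeff p k * w ^ k) * prod_mset N ^ d"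
    unfolding sum_distrib_right by (intro sum.cong refl) (simp add: g q mult.assoc)
  also have "\<dots> = 0" using p(3) by (simp add: poly_altdef d_def)
  finally have dependence: "(\<Sum>k\<le>d. of_rat (q k) * prod_mset (g k)) = 0" .
  have "\<forall>k\<in>{..d}. q k = 0"
  proof (rule Q_alg_indep_prod_mset[OF ind finite_atMost _ _ dependence])
    show "inj_on g {..d}"
      unfolding g_def by (rule repeat_mset_combination_inj) fact
  qed (use assms(3,4) in \<open>auto simp: g_def subset_iff simp flip: count_greater_zero_iff\<close>)
  then have "lead_coeff p = 0" by (simp add: q d_def)
  with p(2) show False by simp
qed

lemma algebraic_rat_affine:
  fixes z r0 r1 :: complex
  assumes "algebraic z" "r0 \<in> \<rat>" "r1 \<in> \<rat>"
  shows "algebraic (r0 + r1 * z)"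
proof (cases "r1 = 0")
  case True
  then show ?thesis using assms(2) by (simp add: rat_imp_algebraic)
next
  case False
  obtain p where p: "\<forall>i. coeff p i \<in> \<rat>" "p \<noteq> 0" "poly p z = 0"
    using assms(1) algebraic_altdef by blast
  define q where "q = pcompose p [:-r0/r1, 1/r1:]"
  have "poly q (r0 + r1 * z) = 0" using p False by (simp add: q_def poly_pcompose field_simps)
  moreover have "q \<noteq> 0" using p False by (simp add: q_def pcompose_eq_0_iff)
  moreover have "coeff q i \<in> \<rat>" for i unfolding q_def
    by (rule coeff_pcompose_semiring_closed) (use p assms in \<open>auto simp: coeff_pCons split: nat.splits\<close>)
  ultimately show ?thesis by (intro algebraicI') auto
qed

lemma Q_lin_indep_snoc:
  assumes indep: "Q_lin_indep (length xs) (nth xs)"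
    and span: "\<forall>q. b \<noteq> (\<Sum>i<length xs. of_rat (q i) * xs ! i)"
  shows "Q_lin_indep (length (xs @ [b])) (nth (xs @ [b]))"
  unfolding Q_lin_indep_def
proof (rule allI, rule impI)
  fix q :: "nat \<Rightarrow> rat"
  define n where "n = length xs"
  assume "(\<Sum>i<length (xs @ [b]). of_rat (q i) * (xs @ [b]) ! i) = 0"
  then have rel: "(\<Sum>i<n. of_rat (q i) * xs ! i) + of_rat (q n) * b = 0"
    by (simp add: n_def nth_append)
  have "q n = 0"
  proof (rule ccontr)
    assume "q n \<noteq> 0"
    with rel have "b = (\<Sum>i<n. of_rat (- q i / q n) * xs ! i)"
      by (simp add: of_rat_divide of_rat_minus sum_divide_distrib[symmetric] sum_negf eq_neg_iff_add_eq_0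
          field_simps)
    with span[THEN spec, of "\<lambda>i. - q i / q n"] show False by (simp add: n_def)
  qed
  moreover have "\<forall>i<n. q i = 0"
    using indep rel \<open>q n = 0\<close> unfolding Q_lin_indep_def n_def by simp
  ultimately show "\<forall>i<length (xs @ [b]). q i = 0"
    by (simp add: n_def less_Suc_eq)
qed

lemma Q_lin_indep_map_mult:
  assumes "Q_lin_indep (length xs) (nth xs)" "L \<noteq> 0"
  shows "Q_lin_indep (length (map (\<lambda>x. x * L) xs)) (nth (map (\<lambda>x. x * L) xs))"
  unfolding Q_lin_indep_def
proof (rule allI, rule impI)
  fix q :: "nat \<Rightarrow> rat"
  assume "(\<Sum>i<length (map (\<lambda>x. x * L) xs). of_rat (q i) * map (\<lambda>x. x * L) xs ! i) = 0"
  then have "(\<Sum>i<length xs. of_rat (q i) * xs ! i) * L = 0"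
    by (simp add: sum_distrib_right mult.assoc)
  with assms show "\<forall>i<length (map (\<lambda>x. x * L) xs). q i = 0" by (simp add: Q_lin_indep_def)
qed

lemma schanuel_nth:
  assumes "schanuel" "Q_lin_indep (length ys) (nth ys)"
  shows "trdeg_ge (set ys \<union> exp ` set ys) (length ys)"
proof -
  have "nth ys ` {..<length ys} = set ys"
    by (auto simp: set_conv_nth)
  then show ?thesis
    using assms unfolding schanuel_def by (metis image_image)
qed

lemma schanuel_mult:
  assumes "schanuel" "Q_lin_indep (length xs) (nth xs)" "L \<noteq> 0"
  shows "trdeg_ge ((\<lambda>x. x * L) ` set xs \<union> (\<lambda>x. exp (x * L)) ` set xs) (length xs)"
  using schanuel_nth[OF assms(1) Q_lin_indep_map_mult[OF assms(2,3)]] by (simp add: image_image)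

lemma Q_lin_indep_one_irrational:
  assumes "z \<notin> \<rat>"
  shows "Q_lin_indep (length [1, z]) (nth [1, z])"
proof -
  have "Q_lin_indep (length [1]) (nth [1])"
    using Q_lin_indep_snoc[of "[]" 1] by (simp add: Q_lin_indep_def)
  then show ?thesis
    using Q_lin_indep_snoc[of "[1]" z] assms Rats_of_rat by force
qed

lemma Q_lin_indep_one_irrational_transcendental:
  assumes "z \<notin> \<rat>" "algebraic z" "\<not> algebraic \<beta>"
  shows "Q_lin_indep (length [1, z, \<beta>]) (nth [1, z, \<beta>])"
proof -
  have "\<beta> \<noteq> (\<Sum>i<length [1, z]. of_rat (q i) * [1, z] ! i)" for q :: "nat \<Rightarrow> rat"
  proof -
    have "algebraic (of_rat (q 0) + of_rat (q 1) * z)"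
      by (rule algebraic_rat_affine[OF \<open>algebraic z\<close>]) auto
    with assms(3) show ?thesis by auto
  qed
  then show ?thesis
    using Q_lin_indep_snoc[OF Q_lin_indep_one_irrational[OF assms(1)]] by fastforce
qed

lemma Q_alg_indep_not_algebraic:
  assumes "Q_alg_indep T" "a \<in> T"
  shows "\<not> algebraic a"
  using Q_alg_indep_prod_mset_neq[of T a "{#a#}" "{#}"] assms by auto

lemma not_trdeg_ge_2_algebraic_ratio:
  assumes "algebraic \<alpha>" "algebraic \<beta>" "algebraic z"
  shows "\<not> trdeg_ge {\<alpha>, \<beta>, L, z * L} 2"
proof
  assume "trdeg_ge {\<alpha>, \<beta>, L, z * L} 2"
  then obtain T where T: "T \<subseteq> {\<alpha>, \<beta>, L, z * L}" "card T = 2" "Q_alg_indep T"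
    unfolding trdeg_ge_def by blast
  then have "T \<subseteq> {L, z * L}" using Q_alg_indep_not_algebraic assms by blast
  moreover have "card {L, z * L} \<le> 2" by (simp add: card_insert_if)
  ultimately have "T = {L, z * L}" using T(2) by (intro card_seteq) auto
  with T(2) have "L \<in> T" "z * L \<in> T" "z * L \<noteq> L" by auto
  then show False
    using Q_alg_indep_prod_mset_neq[OF T(3) \<open>algebraic z\<close>, of "{#z * L#}" "{#L#}"] by simp
qed

lemma not_trdeg_ge_3_product_relation:
  assumes "algebraic \<alpha>" "algebraic z" "z * L \<noteq> L"
  shows "\<not> trdeg_ge {\<alpha>, \<beta>, z, L, z * L, \<beta> * L} 3"
proof
  assume "trdeg_ge {\<alpha>, \<beta>, z, L, z * L, \<beta> * L} 3"
  then obtain T where T: "T \<subseteq> {\<alpha>, \<beta>, z, L, z * L, \<beta> * L}" "card T = 3" "Q_alg_indep T"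
    unfolding trdeg_ge_def by blast
  have not_both: "\<not> (L \<in> T \<and> z * L \<in> T)"
    using Q_alg_indep_prod_mset_neq[OF T(3) \<open>algebraic z\<close>, of "{#z * L#}" "{#L#}"] assms(3) by auto
  have T_sub: "T \<subseteq> {L, z * L, \<beta> * L, \<beta>}"
    using T Q_alg_indep_not_algebraic assms(1,2) by blast
  obtain y w where yw: "y = w * L" "algebraic w" "T \<subseteq> {y, \<beta>, \<beta> * L}"
  proof (cases "L \<in> T")
    case True
    then show ?thesis using that[of L 1] not_both T_sub by auto
  next
    case False
    then show ?thesis using that[of "z * L" z] \<open>algebraic z\<close> T_sub by auto
  qed
  moreover have "card {y, \<beta>, \<beta> * L} \<le> 3" by (simp add: card_insert_if)
  ultimately have "T = {y, \<beta>, \<beta> * L}" using T(2) by (intro card_seteq) auto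
  moreover have "prod_mset {#y, \<beta>#} = w * prod_mset {#\<beta> * L#}"
    using yw(1) by (simp add: algebra_simps)
  ultimately show False
    using Q_alg_indep_prod_mset_neq[OF T(3) \<open>algebraic w\<close>, of "{#y, \<beta>#}" "{#\<beta> * L#}"] by auto
qed

theorem mainTheorem5:
  fixes \<alpha> L z :: complex
  assumes "schanuel"
    and "algebraic \<alpha>" and "\<alpha> \<noteq> 0"
    and "exp L = \<alpha>"
    and "z \<notin> \<rat>"
    and "exp (exp (z * L) * L) = z"
  shows "\<not> algebraic z"
proof
  assume "algebraic z"
  define \<beta> where "\<beta> = exp (z * L)"
  have "exp (\<beta> * L) = z" using assms(6) by (simp add: \<beta>_def)
  have "z \<noteq> 1" using assms(5) by auto
  moreover have "L \<noteq> 0" using assms(5,6) by auto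
  ultimately have "z * L \<noteq> L" by simp
  show False
  proof (cases "algebraic \<beta>")
    case True
    have "trdeg_ge {\<alpha>, \<beta>, L, z * L} 2"
      using schanuel_mult[OF assms(1) Q_lin_indep_one_irrational[OF assms(5)] \<open>L \<noteq> 0\<close>]
      by (simp add: assms(4) numeral_2_eq_2 flip: \<beta>_def)
    with not_trdeg_ge_2_algebraic_ratio[OF assms(2) True \<open>algebraic z\<close>] show False by contradiction
  next
    case False
    have "trdeg_ge {\<alpha>, \<beta>, z, L, z * L, \<beta> * L} 3"
      using schanuel_mult[OF assms(1) Q_lin_indep_one_irrational_transcendental[OF assms(5) \<open>algebraic z\<close> False]
          \<open>L \<noteq> 0\<close>]
      by (simp add: assms(4) \<open>exp (\<beta> * L) = z\<close> numeral_3_eq_3 flip: \<beta>_def)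
    with not_trdeg_ge_3_product_relation[OF assms(2) \<open>algebraic z\<close> \<open>z * L \<noteq> L\<close>] show False by contradiction
  qed
qed

end
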